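(* Let $\gamma=(\alpha,\beta)\in\mathbb N_0^{2n}$ with $\alpha\ge\beta$, let $\sigma\in\{+,-\}$ with $\alpha>\beta$ if $\sigma=-$, and assume $g_\sigma^\gamma\in\hat A_n^\perp$. Let $y_\pm^{(\ell)}$ be the Commutator Chain of Type II generated by $g_+^\gamma,g_-^\gamma$. Then for all $\ell\ge0$, $$\deg(y_\sigma^{(\ell)})=3^\ell(|\gamma|-2)+2\ge 3^\ell+2 .$$
   Context: Fix $n\ge 1$. The Weyl algebra $A_n$ is the unital associative $\mathbb{C}$-algebra generated by $a_1,\dots,a_n,a_1^\dagger,\dots,a_n^\dagger$ subject to $[a_i,a_j^\dagger]=\delta_{ij}$ and $[a_i,a_j]=[a_i^\dagger,a_j^\dagger]=0$. For $\gamma=(\alpha,\beta)\in\mathbb N_0^{2n}$ set $a^{\gamma}=(a_1^\dagger)^{\alpha_1}\cdots(a_n^\dagger)^{\alpha_n}a_1^{\beta_1}\cdots a_n^{\beta_n}$; these form a $\mathbb C$-basis of $A_n$; $|\gamma|=\sum_j\alpha_j+\sum_j\beta_j$. For $0\neq g\in A_n$, $\deg(g)$ is the largest $|\gamma|$ such that $a^\gamma$ has nonzero coefficient in the expansion of $g$; $\deg(0)=-\infty$. The adjoint $\dagger$ is the conjugate-linear anti-automorphism with $(a_j)^\dagger=a_j^\dagger$, $(a_j^\dagger)^\dagger=a_j$, $1^\dagger=1$. The skew-hermitian Weyl algebra is $\hat A_n=\{g\in A_n: g^\dagger=-g\}$. Let $g_+^\gamma=i((a^\gamma)^\dagger+a^\gamma)$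 and $g_-^\gamma=(a^\gamma)^\dagger-a^\gamma$. With lexicographic order on $\mathbb N_0^n$, a basis element is $g_+^{(\alpha,\beta)}$ with $\alpha\ge\beta$ or $g_-^{(\alpha,\beta)}$ with $\alpha>\beta$; these form an $\mathbb R$-basis of $\hat A_n$. Subspaces of $\hat A_n$ (real spans of basis elements $g_\sigma^{\gamma}$, $\gamma=(\alpha,\beta)$): $\hat A_n^0$ is spanned by $2i$ and $2ia_k^\dagger a_k$ ($1\le k\le n$), i.e. the basis elements with $\alpha=\beta$, $|\gamma|\in\{0,2\}$; $\hat A_n^1$ by basis elements with $|\gamma|=1$; $\hat A_n^2$ by basis elements with $|\gamma|=2$ and $\alpha\ne\beta$; $\hat A_n^=$ by basis elements with $\alpha=\beta$ and $|\gamma|\ge 4$; $\hat A_n^{\mathrm{om}}$ by basis elements with $|\gamma|\ge3$ for which there is a unique index $k$ with $\alpha_k+\beta_k=1$ and $\alpha_j=\beta_j$ for all $j\neq k$; $\hat A_n^\perp$ by all remaining basis elements. Commutator Chain of Type II generated by $g_+^\gamma,g_-^\gamma$: $y_\sigma^{(0)}=g_\sigma^\gamma$ for $\sigma\in\{+,-\}$, and $y_\sigma^{(\ell+1)}=[y_\sigma^{(\ell)},[y_+^{(\ell)},y_-^{(\ell)}]]$ for $\ell\ge0$. *)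

theory Defs
  imports Complex_Main "HOL-Library.Poly_Mapping" "HOL-Library.Extended_Real"
begin

(* Multi-indices: finitely supported nat \<Rightarrow>\<^sub>0 nat; mode j of the paper (1..n) is index j-1 here. *)
type_synonym midx = "nat \<Rightarrow>\<^sub>0 nat"

(* Normal-ordered monomial index gamma = (alpha, beta) for  a^gamma = (a^dag)^alpha a^beta *)
type_synonym widx = "midx \<times> midx"

(* Elements of the Weyl algebra: finite complex linear combinations of the basis a^gamma *)
type_synonym weyl = "widx \<Rightarrow>\<^sub>0 complex"

definition midx_abs :: "midx \<Rightarrow> nat" where
  "midx_abs a = (\<Sum>j\<in>Poly_Mapping.keys a. Poly_Mapping.lookup a j)"

definition widx_abs :: "widx \<Rightarrow> nat" where
  "widx_abs g = midx_abs (fst g) + midx_abs (snd g)"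

definition in_modes :: "nat \<Rightarrow> widx \<Rightarrow> bool" where
  "in_modes n g \<longleftrightarrow> Poly_Mapping.keys (fst g) \<subseteq> {..<n} \<and> Poly_Mapping.keys (snd g) \<subseteq> {..<n}"

definition wmon :: "widx \<Rightarrow> weyl" where
  "wmon g = Poly_Mapping.single g 1"

(* Normal ordering: a^b (a^dag)^c = sum_k prod_j k_j! C(b_j,k_j) C(c_j,k_j) (a^dag)^(c-k) a^(b-k),
   hence  a^(al,be) a^(al',be') = sum_{k \<le> min(be,al')} coeff(k) a^(al+al'-k, be+be'-k). *)
definition nord_coeff :: "midx \<Rightarrow> midx \<Rightarrow> midx \<Rightarrow> complex" where
  "nord_coeff b c k = (\<Prod>j\<in>Poly_Mapping.keys k. of_nat (fact (Poly_Mapping.lookup k j) * (Poly_Mapping.lookup b j choose Poly_Mapping.lookup k j)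
                                      * (Poly_Mapping.lookup c j choose Poly_Mapping.lookup k j)))"

definition mon_mult :: "widx \<Rightarrow> widx \<Rightarrow> weyl" where
  "mon_mult g h =
     (\<Sum>k\<in>{k::midx. \<forall>j. Poly_Mapping.lookup k j \<le> min (Poly_Mapping.lookup (snd g) j) (Poly_Mapping.lookup (fst h) j)}.
        Poly_Mapping.single (fst g + fst h - k, snd g + snd h - k)
          (nord_coeff (snd g) (fst h) k))"

definition wscale :: "complex \<Rightarrow> weyl \<Rightarrow> weyl" where
  "wscale c f = Poly_Mapping.map (\<lambda>z. c * z) f"

definition wmult :: "weyl \<Rightarrow> weyl \<Rightarrow> weyl" where
  "wmult f g = (\<Sum>p\<in>Poly_Mapping.keys f. \<Sum>q\<in>Poly_Mapping.keys g. wscale (Poly_Mapping.lookup f p * Poly_Mapping.lookup g q) (mon_mult p q))"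

definition wcomm :: "weyl \<Rightarrow> weyl \<Rightarrow> weyl" where
  "wcomm f g = wmult f g - wmult g f"

(* Adjoint: ((a^dag)^al a^be)^dag = (a^dag)^be a^al, conjugate-linear *)
definition wadj :: "weyl \<Rightarrow> weyl" where
  "wadj f = (\<Sum>p\<in>Poly_Mapping.keys f. Poly_Mapping.single (snd p, fst p) (cnj (Poly_Mapping.lookup f p)))"

definition wdeg :: "weyl \<Rightarrow> ereal" where
  "wdeg f = (if f = 0 then -\<infinity> else ereal (real (Max (widx_abs ` Poly_Mapping.keys f))))"

definition lex_less :: "midx \<Rightarrow> midx \<Rightarrow> bool" where
  "lex_less a b \<longleftrightarrow> (\<exists>i. (\<forall>j<i. Poly_Mapping.lookup a j = Poly_Mapping.lookup b j) \<and> Poly_Mapping.lookup a i < Poly_Mapping.lookup b i)"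

datatype sgn = SPlus | SMinus

definition gbasis :: "sgn \<Rightarrow> widx \<Rightarrow> weyl" where
  "gbasis s g = (case s of
      SPlus \<Rightarrow> wscale \<i> (wadj (wmon g) + wmon g)
    | SMinus \<Rightarrow> wadj (wmon g) - wmon g)"

(* Indices of the R-basis of the skew-hermitian Weyl algebra hat A_n *)
definition basis_idx :: "nat \<Rightarrow> sgn \<Rightarrow> widx \<Rightarrow> bool" where
  "basis_idx n s g \<longleftrightarrow> in_modes n g \<and>
     (case s of SPlus \<Rightarrow> \<not> lex_less (fst g) (snd g)
              | SMinus \<Rightarrow> lex_less (snd g) (fst g))"

definition class0 :: "widx \<Rightarrow> bool" where
  "class0 g \<longleftrightarrow> fst g = snd g \<and> widx_abs g \<in> {0, 2}"
definition class1 :: "widx \<Rightarrow> bool" where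
  "class1 g \<longleftrightarrow> widx_abs g = 1"
definition class2 :: "widx \<Rightarrow> bool" where
  "class2 g \<longleftrightarrow> widx_abs g = 2 \<and> fst g \<noteq> snd g"
definition class_eq :: "widx \<Rightarrow> bool" where
  "class_eq g \<longleftrightarrow> fst g = snd g \<and> widx_abs g \<ge> 4"
definition class_om :: "nat \<Rightarrow> widx \<Rightarrow> bool" where
  "class_om n g \<longleftrightarrow> widx_abs g \<ge> 3 \<and>
     (\<exists>!k. k < n \<and> Poly_Mapping.lookup (fst g) k + Poly_Mapping.lookup (snd g) k = 1 \<and>
            (\<forall>j<n. j \<noteq> k \<longrightarrow> Poly_Mapping.lookup (fst g) j = Poly_Mapping.lookup (snd g) j))"
definition class_perp :: "nat \<Rightarrow> widx \<Rightarrow> bool" where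
  "class_perp n g \<longleftrightarrow> \<not> class0 g \<and> \<not> class1 g \<and> \<not> class2 g \<and> \<not> class_eq g \<and> \<not> class_om n g"

definition rspan :: "weyl set \<Rightarrow> weyl set" where
  "rspan B = {f. \<exists>S c. finite S \<and> S \<subseteq> B \<and> f = (\<Sum>b\<in>S. wscale (complex_of_real (c b)) b)}"

definition hatA_perp :: "nat \<Rightarrow> weyl set" where
  "hatA_perp n = rspan {gbasis s g | s g. basis_idx n s g \<and> class_perp n g}"

fun chain2 :: "weyl \<Rightarrow> weyl \<Rightarrow> nat \<Rightarrow> weyl \<times> weyl" where
  "chain2 yp ym 0 = (yp, ym)"
| "chain2 yp ym (Suc l) =
     (let (p, m) = chain2 yp ym l; c = wcomm p m in (wcomm p c, wcomm m c))"

definition chain_sel :: "sgn \<Rightarrow> weyl \<times> weyl \<Rightarrow> weyl" where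
  "chain_sel s pm = (case s of SPlus \<Rightarrow> fst pm | SMinus \<Rightarrow> snd pm)"

end

theory Submission
  imports Defs "HOL-Computational_Algebra.Polynomial"
begin

text \<open>
  Only the top-degree part of a commutator matters: if f, g have degrees D1, D2 and homogeneous
  leading parts s, t, then [f, g] has degree at most D1 + D2 - 2, and its part of that degree is
  the Poisson bracket {s, t}, made of the single contractions in the normal ordering of fg - gf.
  Hence the degrees along the commutator chain are 3^l (|\<gamma>| - 2) + 2 as long as the
  corresponding Poisson chain of symbols never vanishes.

  For \<gamma> = (\<alpha>, \<beta>) every member of that Poisson chain has the form
  p a^(\<alpha>,\<beta>) G(N) + q a^(\<beta>,\<alpha>) G(N), with G a polynomial in the number variables
  N_j = a_j\<dagger> a_j. Brackets of such elements only involve the derivation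
  \<Sum>_j (\<beta>_j - \<alpha>_j) \<partial>/\<partial>N_j, which becomes d/dt on the line N_j = 1 + (\<beta>_j - \<alpha>_j) t.
  Restricted to that line, G_(l+1) = G_l (G_l^2 R)'', where R, the restriction of N^(\<alpha>+\<beta>),
  has degree \<Sum>_(\<alpha>_j \<noteq> \<beta>_j) (\<alpha>_j + \<beta>_j). For \<gamma> in the class \<perp> this degree is at
  least 2, so no G_l vanishes.
\<close>

abbreviation lookup where "lookup \<equiv> Poly_Mapping.lookup"
abbreviation keys where "keys \<equiv> Poly_Mapping.keys"
abbreviation single where "single \<equiv> Poly_Mapping.single"

definition extend_linear :: "('a \<Rightarrow> 'b::zero \<Rightarrow> 'c::comm_monoid_add) \<Rightarrow> ('a \<Rightarrow>\<^sub>0 'b) \<Rightarrow> 'c" where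
  "extend_linear h G = (\<Sum>m\<in>keys G. h m (lookup G m))"

lemma extend_linear_eq_sum:
  assumes "finite P" "keys G \<subseteq> P" "\<And>m. h m 0 = 0"
  shows "extend_linear h G = (\<Sum>m\<in>P. h m (lookup G m))"
  unfolding extend_linear_def using assms by (intro sum.mono_neutral_left) (auto simp: in_keys_iff)

lemma extend_linear_zero [simp]: "extend_linear h 0 = 0"
  by (simp add: extend_linear_def)

lemma extend_linear_single:
  assumes "\<And>m. h m 0 = 0"
  shows "extend_linear h (single m c) = h m c"
  using extend_linear_eq_sum[of "{m}" "single m c" h] assms by simp

lemma extend_linear_add:
  fixes h :: "'a \<Rightarrow> 'b::monoid_add \<Rightarrow> 'c::cancel_comm_monoid_add"
  assumes add: "\<And>m x y. h m (x + y) = h m x + h m y"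
  shows "extend_linear h (F + G) = extend_linear h F + extend_linear h G"
proof -
  have h0: "h m 0 = 0" for m
    using add[of m 0 0] by simp
  let ?P = "keys F \<union> keys G"
  have "extend_linear h (F + G) = (\<Sum>m\<in>?P. h m (lookup (F + G) m))"
    using keys_add[of F G] h0 by (intro extend_linear_eq_sum) auto
  also have "\<dots> = (\<Sum>m\<in>?P. h m (lookup F m)) + (\<Sum>m\<in>?P. h m (lookup G m))"
    by (simp add: lookup_add add sum.distrib)
  also have "\<dots> = extend_linear h F + extend_linear h G"
    by (simp add: extend_linear_eq_sum[of ?P] h0)
  finally show ?thesis .
qed

lemma extend_linear_sum:
  fixes h :: "'a \<Rightarrow> 'b::comm_monoid_add \<Rightarrow> 'c::cancel_comm_monoid_add"
  assumes "\<And>m x y. h m (x + y) = h m x + h m y"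
  shows "extend_linear h (sum f S) = (\<Sum>i\<in>S. extend_linear h (f i))"
  by (induction S rule: infinite_finite_induct) (simp_all add: extend_linear_add assms)

lemma poly_mapping_eq_sum_single: "G = (\<Sum>m\<in>keys G. single m (lookup G m))"
proof (rule poly_mapping_eqI)
  fix x
  show "lookup G x = lookup (\<Sum>m\<in>keys G. single m (lookup G m)) x"
    by (cases "x \<in> keys G") (auto simp: lookup_sum lookup_single when_def in_keys_iff)
qed

lemma poly_mapping_single_induct [case_names zero single add]:
  fixes G :: "'a \<Rightarrow>\<^sub>0 'b::comm_monoid_add"
  assumes "P 0" "\<And>m c. P (single m c)" "\<And>f g. P f \<Longrightarrow> P g \<Longrightarrow> P (f + g)"
  shows "P G"
proof -
  have "P (\<Sum>m\<in>S. single m (lookup G m))" if "finite S" for S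
    using that by (induction S rule: finite_induct) (auto intro: assms)
  then show ?thesis by (subst poly_mapping_eq_sum_single) simp
qed

lemma lookup_single_0_mult: "lookup (single 0 c * (G :: midx \<Rightarrow>\<^sub>0 complex)) m = c * lookup G m"
  unfolding mult_map_scale_conv_mult[symmetric] by (simp add: map.rep_eq when_def)

definition unit_idx :: "nat \<Rightarrow> midx" where
  "unit_idx j = single j 1"

lemma lookup_unit_idx: "lookup (unit_idx j) i = (if i = j then 1 else 0)"
  by (simp add: unit_idx_def lookup_single when_def)

lemma keys_unit_idx [simp]: "keys (unit_idx j) = {j}"
  by (simp add: unit_idx_def)

lemma unit_idx_inject: "unit_idx i = unit_idx j \<longleftrightarrow> i = j"
  by (metis lookup_unit_idx one_neq_zero)

lemma midx_abs_eq_sum: "finite S \<Longrightarrow> keys a \<subseteq> S \<Longrightarrow> midx_abs a = (\<Sum>j\<in>S. lookup a j)"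
  unfolding midx_abs_def by (rule sum.mono_neutral_left) (auto simp: in_keys_iff)

lemma midx_abs_add: "midx_abs (a + b) = midx_abs a + midx_abs b"
proof -
  let ?S = "keys a \<union> keys b"
  have "midx_abs (a + b) = (\<Sum>j\<in>?S. lookup (a + b) j)"
    using keys_add[of a b] by (intro midx_abs_eq_sum) auto
  also have "\<dots> = midx_abs a + midx_abs b"
    by (simp add: lookup_add sum.distrib midx_abs_eq_sum[of ?S])
  finally show ?thesis .
qed

lemma midx_abs_minus:
  assumes "\<forall>j. lookup k j \<le> lookup a j"
  shows "midx_abs (a - k) = midx_abs a - midx_abs k" "midx_abs k \<le> midx_abs a"
proof -
  have "(a - k) + k = a" using assms by (intro poly_mapping_eqI) (simp add: lookup_add lookup_minus)
  then have "midx_abs (a - k) + midx_abs k = midx_abs a" by (metis midx_abs_add)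
  then show "midx_abs (a - k) = midx_abs a - midx_abs k" "midx_abs k \<le> midx_abs a" by auto
qed

lemma midx_abs_eq_0_iff: "midx_abs k = 0 \<longleftrightarrow> k = 0"
proof
  assume "midx_abs k = 0"
  then have "\<forall>j\<in>keys k. lookup k j = 0" unfolding midx_abs_def by simp
  then show "k = 0" by (intro poly_mapping_eqI) (auto simp: in_keys_iff)
qed (simp add: midx_abs_def)

lemma midx_abs_unit_idx [simp]: "midx_abs (unit_idx j) = 1"
  by (simp add: midx_abs_def unit_idx_def)

lemma unit_idx_neq_zero [simp]: "unit_idx j \<noteq> 0"
  by (metis midx_abs_unit_idx midx_abs_eq_0_iff zero_neq_one)

lemma midx_abs_eq_1_imp_unit_idx:
  assumes "midx_abs k = 1"
  obtains j where "k = unit_idx j"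
proof -
  have "k \<noteq> 0" using assms by (auto simp: midx_abs_def)
  then obtain j where j: "j \<in> keys k"
    by (metis ex_in_conv in_keys_iff poly_mapping_eqI lookup_zero)
  have "midx_abs k = lookup k j + (\<Sum>i\<in>keys k - {j}. lookup k i)"
    unfolding midx_abs_def using sum.remove[OF finite_keys j] by simp
  moreover have "lookup k j \<ge> 1" using j by (simp add: in_keys_iff)
  ultimately have kj: "lookup k j = 1" and rest: "(\<Sum>i\<in>keys k - {j}. lookup k i) = 0"
    using assms by linarith+
  from rest have "\<forall>i. i \<noteq> j \<longrightarrow> lookup k i = 0" by (auto simp: in_keys_iff)
  with kj have "k = unit_idx j" by (intro poly_mapping_eqI) (auto simp: lookup_unit_idx)
  then show ?thesis by (rule that)
qed

lemma finite_midx_pointwise_le: "finite {k::midx. \<forall>j. lookup k j \<le> lookup b j}"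
proof -
  let ?A = "{k::midx. \<forall>j. lookup k j \<le> lookup b j}"
  let ?F = "{f. \<forall>x. (x \<in> keys b \<longrightarrow> f x \<in> {0..midx_abs b}) \<and> (x \<notin> keys b \<longrightarrow> f x = (0::nat))}"
  have "lookup ` ?A \<subseteq> ?F"
  proof (clarsimp, intro conjI allI impI)
    fix k x assume "\<forall>j. lookup k j \<le> lookup b j" "x \<in> keys b"
    then show "lookup k x \<le> midx_abs b" unfolding midx_abs_def
      by (meson finite_keys le_trans member_le_sum zero_le)
  next
    fix k x assume "\<forall>j. lookup k j \<le> lookup b j" "x \<notin> keys b"
    then show "lookup k x = 0" by (metis in_keys_iff le_zero_eq)
  qed
  moreover have "finite ?F" by (rule finite_set_of_finite_funs) auto
  ultimately have "finite (lookup ` ?A)" by (rule finite_subset)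
  moreover have "inj_on lookup ?A" by (rule inj_onI, rule poly_mapping_eqI) simp
  ultimately show ?thesis using finite_imageD by blast
qed

lemma add_minus_unit_idx: "j \<in> keys y \<Longrightarrow> c + y - unit_idx j = c + (y - unit_idx j)"
  by (rule poly_mapping_eqI) (auto simp: lookup_add lookup_minus lookup_unit_idx in_keys_iff)

section \<open>Leading parts of commutators\<close>

lemma lookup_wscale [simp]: "lookup (wscale c f) x = c * lookup f x"
  unfolding wscale_def by (simp add: map.rep_eq when_def)

lemma wscale_0 [simp]: "wscale 0 f = 0"
  by (rule poly_mapping_eqI) simp

lemma wscale_zero [simp]: "wscale c 0 = 0"
  by (rule poly_mapping_eqI) simp

lemma wscale_add: "wscale c (f + g) = wscale c f + wscale c g"
  by (rule poly_mapping_eqI) (simp add: lookup_add algebra_simps)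

lemma wscale_add_left: "wscale (c + d) f = wscale c f + wscale d f"
  by (rule poly_mapping_eqI) (simp add: lookup_add algebra_simps)

lemma wscale_wscale: "wscale c (wscale d f) = wscale (c * d) f"
  by (rule poly_mapping_eqI) (simp add: algebra_simps)

lemma wscale_minus: "wscale c (- f) = - wscale c f"
  by (rule poly_mapping_eqI) simp

lemma wscale_sum: "wscale c (sum f S) = (\<Sum>i\<in>S. wscale c (f i))"
  by (rule poly_mapping_eqI) (simp add: lookup_sum sum_distrib_left)

lemma wscale_single: "wscale c (single x d) = single x (c * d)"
  by (rule poly_mapping_eqI) (simp add: lookup_single when_def)

definition contraction_set :: "midx \<Rightarrow> midx \<Rightarrow> midx set" where
  "contraction_set b c = {k. \<forall>j. lookup k j \<le> min (lookup b j) (lookup c j)}"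

lemma finite_contraction_set: "finite (contraction_set b c)"
  by (rule finite_subset[OF _ finite_midx_pointwise_le[of b]]) (auto simp: contraction_set_def)

lemma lookup_mon_mult: "lookup (mon_mult g h) x =
   (\<Sum>k\<in>contraction_set (snd g) (fst h).
      if (fst g + fst h - k, snd g + snd h - k) = x then nord_coeff (snd g) (fst h) k else 0)"
  unfolding mon_mult_def contraction_set_def[symmetric]
  by (simp add: lookup_sum lookup_single when_def)

lemma nord_coeff_0: "nord_coeff b c 0 = 1"
  by (simp add: nord_coeff_def)

lemma nord_coeff_unit_idx: "nord_coeff b c (unit_idx j) = of_nat (lookup b j * lookup c j)"
  by (simp add: nord_coeff_def lookup_unit_idx)

lemma widx_abs_contraction:
  assumes "\<forall>j. lookup k j \<le> lookup b j" "\<forall>j. lookup k j \<le> lookup c j"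
  shows "widx_abs (a + c - k, b + d - k) + 2 * midx_abs k
           = midx_abs a + midx_abs b + midx_abs c + midx_abs d"
proof -
  have "\<forall>j. lookup k j \<le> lookup (a + c) j" using assms by (simp add: lookup_add add_increasing)
  moreover have "\<forall>j. lookup k j \<le> lookup (b + d) j" using assms by (simp add: lookup_add trans_le_add1)
  ultimately show ?thesis
    unfolding widx_abs_def using midx_abs_minus[of k "a + c"] midx_abs_minus[of k "b + d"]
    by (simp add: midx_abs_add)
qed

definition single_contractions :: "widx \<Rightarrow> widx \<Rightarrow> weyl" where
  "single_contractions p q = (\<Sum>j\<in>keys (snd p) \<inter> keys (fst q).
      single (fst p + fst q - unit_idx j, snd p + snd q - unit_idx j)
             (of_nat (lookup (snd p) j * lookup (fst q) j)))"

lemma single_contractions_eq_sum: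
  assumes "finite S" "keys (snd p) \<inter> keys (fst q) \<subseteq> S"
  shows "single_contractions p q = (\<Sum>j\<in>S.
      single (fst p + fst q - unit_idx j, snd p + snd q - unit_idx j)
             (of_nat (lookup (snd p) j * lookup (fst q) j)))"
  unfolding single_contractions_def
proof (rule sum.mono_neutral_left[OF assms], intro ballI)
  fix i assume "i \<in> S - keys (snd p) \<inter> keys (fst q)"
  then have "lookup (snd p) i * lookup (fst q) i = 0" by (auto simp: in_keys_iff)
  then show "single (fst p + fst q - unit_idx i, snd p + snd q - unit_idx i)
               (of_nat (lookup (snd p) i * lookup (fst q) i)) = 0"
    by auto
qed

text \<open>A contraction along \<open>k\<close> lowers the degree by \<open>2|k|\<close>, so near the top only \<open>k = 0\<close> and
  \<open>|k| = 1\<close> contribute.\<close>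

lemma contraction_near_top:
  assumes k: "k \<in> contraction_set b c"
    and top: "midx_abs a + midx_abs b + midx_abs c + midx_abs d \<le> widx_abs (a + c - k, b + d - k) + 2"
  shows "k \<in> insert 0 (unit_idx ` (keys b \<inter> keys c))"
proof -
  have kb: "\<forall>j. lookup k j \<le> lookup b j" and kc: "\<forall>j. lookup k j \<le> lookup c j"
    using k by (auto simp: contraction_set_def)
  have "midx_abs k \<le> 1" using widx_abs_contraction[OF kb kc, of a d] top by linarith
  then consider "midx_abs k = 0" | "midx_abs k = 1" by linarith
  then show ?thesis
  proof cases
    case 1
    then show ?thesis by (simp add: midx_abs_eq_0_iff)
  next
    case 2
    then obtain j where kj: "k = unit_idx j" by (rule midx_abs_eq_1_imp_unit_idx)
    have "j \<in> keys b \<inter> keys c" using kb kc unfolding kj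
      by (auto simp: lookup_unit_idx in_keys_iff dest: spec[of _ j])
    with kj show ?thesis by blast
  qed
qed

lemma lookup_mon_mult_top:
  assumes "widx_abs p + widx_abs q \<le> widx_abs x + 2"
  shows "lookup (mon_mult p q) x
           = (if (fst p + fst q, snd p + snd q) = x then 1 else 0) + lookup (single_contractions p q) x"
proof -
  define b where "b = snd p"
  define c where "c = fst q"
  define J where "J = keys b \<inter> keys c"
  define F where "F k = (if (fst p + c - k, b + snd q - k) = x then nord_coeff b c k else 0)" for k
  define K where "K = insert 0 (unit_idx ` J)"
  have sub: "K \<subseteq> contraction_set b c"
    unfolding K_def contraction_set_def J_def by (auto simp: lookup_unit_idx in_keys_iff Suc_le_eq)
  have zero: "\<forall>k\<in>contraction_set b c - K. F k = 0"
  proof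
    fix k assume k: "k \<in> contraction_set b c - K"
    show "F k = 0"
    proof (rule ccontr)
      assume "F k \<noteq> 0"
      then have "(fst p + c - k, b + snd q - k) = x" unfolding F_def by (auto split: if_splits)
      then have "k \<in> K"
        using contraction_near_top[of k b c "fst p" "snd q"] k assms
        unfolding K_def J_def b_def c_def widx_abs_def by auto
      with k show False by simp
    qed
  qed
  have "lookup (mon_mult p q) x = sum F (contraction_set b c)"
    unfolding lookup_mon_mult F_def b_def c_def ..
  also have "\<dots> = sum F K"
    by (rule sum.mono_neutral_right[OF finite_contraction_set sub zero])
  also have "\<dots> = F 0 + sum (F \<circ> unit_idx) J"
    unfolding K_def J_def
    by (subst sum.insert) (auto simp: sum.reindex inj_on_def unit_idx_inject)
  also have "F 0 = (if (fst p + fst q, snd p + snd q) = x then 1 else 0)"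
    unfolding F_def b_def c_def by (simp add: nord_coeff_0)
  also have "sum (F \<circ> unit_idx) J = lookup (single_contractions p q) x"
    unfolding single_contractions_def lookup_sum F_def J_def b_def c_def
    by (intro sum.cong refl) (simp add: lookup_single when_def nord_coeff_unit_idx)
  finally show ?thesis .
qed

definition poisson_mon :: "widx \<Rightarrow> widx \<Rightarrow> weyl" where
  "poisson_mon p q = single_contractions p q - single_contractions q p"

lemma lookup_mon_commutator_top:
  assumes "widx_abs p + widx_abs q \<le> widx_abs x + 2"
  shows "lookup (mon_mult p q) x - lookup (mon_mult q p) x = lookup (poisson_mon p q) x"
  using lookup_mon_mult_top[OF assms] lookup_mon_mult_top[of q p x] assms
  unfolding poisson_mon_def lookup_minus by (simp add: add.commute)

lemma single_contractions_homogeneous: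
  assumes "lookup (single_contractions p q) x \<noteq> 0"
  shows "widx_abs x + 2 = widx_abs p + widx_abs q"
proof -
  from assms obtain j where j: "j \<in> keys (snd p) \<inter> keys (fst q)"
      and eq: "(fst p + fst q - unit_idx j, snd p + snd q - unit_idx j) = x"
    unfolding single_contractions_def lookup_sum
    by (auto simp: lookup_single when_def elim!: sum.not_neutral_contains_not_neutral split: if_splits)
  have "\<forall>i. lookup (unit_idx j) i \<le> lookup (snd p) i" "\<forall>i. lookup (unit_idx j) i \<le> lookup (fst q) i"
    using j by (auto simp: lookup_unit_idx in_keys_iff Suc_le_eq)
  from widx_abs_contraction[OF this, of "fst p" "snd q"] eq show ?thesis
    unfolding widx_abs_def by simp
qed

lemma poisson_mon_homogeneous:
  "lookup (poisson_mon p q) x \<noteq> 0 \<Longrightarrow> widx_abs x + 2 = widx_abs p + widx_abs q"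
  unfolding poisson_mon_def lookup_minus
  using single_contractions_homogeneous[of p q x] single_contractions_homogeneous[of q p x]
  by (cases "lookup (single_contractions p q) x = 0") (auto simp: add.commute)

definition poisson :: "weyl \<Rightarrow> weyl \<Rightarrow> weyl" where
  "poisson s t = (\<Sum>p\<in>keys s. \<Sum>q\<in>keys t. wscale (lookup s p * lookup t q) (poisson_mon p q))"

lemma poisson_eq_sum:
  assumes "finite P" "keys s \<subseteq> P" "finite Q" "keys t \<subseteq> Q"
  shows "poisson s t = (\<Sum>p\<in>P. \<Sum>q\<in>Q. wscale (lookup s p * lookup t q) (poisson_mon p q))"
proof -
  have "poisson s t = (\<Sum>p\<in>P. \<Sum>q\<in>keys t. wscale (lookup s p * lookup t q) (poisson_mon p q))"
    unfolding poisson_def by (rule sum.mono_neutral_left[OF assms(1,2)]) (auto simp: in_keys_iff)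
  also have "\<dots> = (\<Sum>p\<in>P. \<Sum>q\<in>Q. wscale (lookup s p * lookup t q) (poisson_mon p q))"
    by (intro sum.cong refl sum.mono_neutral_left[OF assms(3,4)]) (auto simp: in_keys_iff)
  finally show ?thesis .
qed

lemma poisson_homogeneous:
  assumes "\<forall>x. lookup s x \<noteq> 0 \<longrightarrow> widx_abs x = D1" "\<forall>x. lookup t x \<noteq> 0 \<longrightarrow> widx_abs x = D2"
    and "lookup (poisson s t) x \<noteq> 0"
  shows "widx_abs x + 2 = D1 + D2"
proof -
  from assms(3) obtain p q where "lookup s p * lookup t q * lookup (poisson_mon p q) x \<noteq> 0"
    unfolding poisson_def lookup_sum by (auto elim!: sum.not_neutral_contains_not_neutral)
  then have "lookup s p \<noteq> 0" "lookup t q \<noteq> 0" "lookup (poisson_mon p q) x \<noteq> 0"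
    by auto
  then have "widx_abs p = D1" "widx_abs q = D2" "widx_abs x + 2 = widx_abs p + widx_abs q"
    using assms(1,2) poisson_mon_homogeneous[of p q x] by blast+
  then show ?thesis by simp
qed

definition leading_part :: "weyl \<Rightarrow> nat \<Rightarrow> weyl \<Rightarrow> bool" where
  "leading_part f D s \<longleftrightarrow>
     (\<forall>x. D \<le> widx_abs x \<longrightarrow> lookup f x = lookup s x) \<and> (\<forall>x. lookup s x \<noteq> 0 \<longrightarrow> widx_abs x = D)"

lemma lookup_wmult:
  "lookup (wmult f g) x = (\<Sum>p\<in>keys f. \<Sum>q\<in>keys g. lookup f p * lookup g q * lookup (mon_mult p q) x)"
  unfolding wmult_def by (simp add: lookup_sum)

lemma lookup_wcomm: "lookup (wcomm f g) x =
   (\<Sum>p\<in>keys f. \<Sum>q\<in>keys g. lookup f p * lookup g q * (lookup (mon_mult p q) x - lookup (mon_mult q p) x))"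
proof -
  have "lookup (wmult g f) x = (\<Sum>p\<in>keys f. \<Sum>q\<in>keys g. lookup f p * lookup g q * lookup (mon_mult q p) x)"
    unfolding lookup_wmult by (subst sum.swap) (simp add: mult.commute)
  then show ?thesis unfolding wcomm_def lookup_minus lookup_wmult
    by (simp add: sum_subtractf right_diff_distrib)
qed

lemma leading_part_commutator_summand:
  assumes f: "leading_part f D1 s" and g: "leading_part g D2 t" and D: "2 \<le> D1 + D2"
    and x: "D1 + D2 - 2 \<le> widx_abs x"
  shows "lookup f p * lookup g q * (lookup (mon_mult p q) x - lookup (mon_mult q p) x)
           = lookup s p * lookup t q * lookup (poisson_mon p q) x"
proof -
  have fs: "D1 \<le> widx_abs p \<Longrightarrow> lookup f p = lookup s p"
    and sh: "lookup s p \<noteq> 0 \<Longrightarrow> widx_abs p = D1"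
    and gt: "D2 \<le> widx_abs q \<Longrightarrow> lookup g q = lookup t q"
    and th: "lookup t q \<noteq> 0 \<Longrightarrow> widx_abs q = D2"
    using f g unfolding leading_part_def by blast+
  show ?thesis
  proof (cases "D1 < widx_abs p \<or> D2 < widx_abs q")
    case True
    then have "lookup f p * lookup g q = 0 \<and> lookup s p * lookup t q = 0"
      using fs gt sh th by (metis less_imp_le less_irrefl mult_eq_0_iff)
    then show ?thesis by (metis mult_zero_left)
  next
    case False
    then have top: "widx_abs p + widx_abs q \<le> widx_abs x + 2" using x D by linarith
    show ?thesis
    proof (cases "widx_abs p = D1 \<and> widx_abs q = D2")
      case True
      then show ?thesis using fs gt lookup_mon_commutator_top[OF top] by simp
    next
      case off_top: False
      then have "lookup s p * lookup t q = 0" using sh th by auto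
      moreover have "lookup (poisson_mon p q) x = 0"
        using poisson_mon_homogeneous[of p q x] off_top False x D by linarith
      ultimately show ?thesis using lookup_mon_commutator_top[OF top] by simp
    qed
  qed
qed

lemma leading_part_wcomm:
  assumes f: "leading_part f D1 s" and g: "leading_part g D2 t" and D: "2 \<le> D1 + D2"
  shows "leading_part (wcomm f g) (D1 + D2 - 2) (poisson s t)"
  unfolding leading_part_def
proof (intro conjI allI impI)
  fix x assume x: "D1 + D2 - 2 \<le> widx_abs x"
  have supp: "keys s \<subseteq> keys f" "keys t \<subseteq> keys g"
    using f g unfolding leading_part_def by (auto simp: in_keys_iff)
  have "lookup (poisson s t) x
      = (\<Sum>p\<in>keys f. \<Sum>q\<in>keys g. lookup s p * lookup t q * lookup (poisson_mon p q) x)"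
    unfolding poisson_eq_sum[OF finite_keys supp(1) finite_keys supp(2)] by (simp add: lookup_sum)
  then show "lookup (wcomm f g) x = lookup (poisson s t) x"
    unfolding lookup_wcomm leading_part_commutator_summand[OF f g D x] ..
next
  fix x assume "lookup (poisson s t) x \<noteq> 0"
  then show "widx_abs x = D1 + D2 - 2"
    using poisson_homogeneous[of s D1 t D2 x] f g unfolding leading_part_def by auto
qed

lemma wdeg_eq_if_leading_part:
  assumes "leading_part f D s" "s \<noteq> 0"
  shows "wdeg f = ereal (real D)"
proof -
  have top: "\<And>x. D \<le> widx_abs x \<Longrightarrow> lookup f x = lookup s x"
    and hom: "\<And>x. lookup s x \<noteq> 0 \<Longrightarrow> widx_abs x = D"
    using assms(1) unfolding leading_part_def by blast+
  obtain x where x: "lookup s x \<noteq> 0" using assms(2) by (metis poly_mapping_eqI lookup_zero)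
  then have fx: "lookup f x \<noteq> 0" and hx: "widx_abs x = D" using top[of x] hom[of x] by auto
  have "widx_abs y \<le> D" if "y \<in> keys f" for y
    using that top[of y] hom[of y] by (fastforce simp: in_keys_iff)
  then have "Max (widx_abs ` keys f) = D"
    by (intro Max_eqI) (use fx hx in \<open>auto simp: in_keys_iff\<close>)
  moreover have "f \<noteq> 0" using fx by auto
  ultimately show ?thesis unfolding wdeg_def by simp
qed

lemma poisson_mon_antisym: "poisson_mon q p = - poisson_mon p q"
  unfolding poisson_mon_def by (rule minus_diff_eq[symmetric])

lemma poisson_antisym: "poisson t s = - poisson s t"
proof -
  have "poisson t s = (\<Sum>p\<in>keys s. \<Sum>q\<in>keys t. wscale (lookup t q * lookup s p) (poisson_mon q p))"
    unfolding poisson_def by (rule sum.swap)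
  also have "\<dots> = (\<Sum>p\<in>keys s. \<Sum>q\<in>keys t. - wscale (lookup s p * lookup t q) (poisson_mon p q))"
    by (intro sum.cong refl, subst poisson_mon_antisym) (simp add: wscale_minus mult.commute)
  also have "\<dots> = - poisson s t" unfolding poisson_def by (simp only: sum_negf)
  finally show ?thesis .
qed

lemma poisson_self: "poisson s s = 0"
proof -
  have "lookup (poisson s s) x = - lookup (poisson s s) x" for x
    by (metis lookup_uminus poisson_antisym)
  then show ?thesis by (intro poly_mapping_eqI) (auto simp: complex_eq_iff)
qed

lemma poisson_zero_left [simp]: "poisson 0 t = 0"
  by (simp add: poisson_def)

lemma poisson_zero_right [simp]: "poisson t 0 = 0"
  by (simp add: poisson_def)

lemma poisson_add_left: "poisson (s1 + s2) t = poisson s1 t + poisson s2 t"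
proof -
  let ?P = "keys s1 \<union> keys s2"
  have "poisson s t = (\<Sum>p\<in>?P. \<Sum>q\<in>keys t. wscale (lookup s p * lookup t q) (poisson_mon p q))"
    if "keys s \<subseteq> ?P" for s
    using that by (intro poisson_eq_sum) auto
  then show ?thesis using keys_add[of s1 s2]
    by (simp add: lookup_add algebra_simps wscale_add_left sum.distrib)
qed

lemma poisson_scale_left: "poisson (wscale c s) t = wscale c (poisson s t)"
proof -
  have "keys (wscale c s) \<subseteq> keys s" by (auto simp: in_keys_iff)
  then have "poisson (wscale c s) t
      = (\<Sum>p\<in>keys s. \<Sum>q\<in>keys t. wscale (lookup (wscale c s) p * lookup t q) (poisson_mon p q))"
    by (intro poisson_eq_sum) auto
  then show ?thesis by (simp add: poisson_def wscale_sum wscale_wscale mult.assoc)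
qed

lemma poisson_add_right: "poisson t (s1 + s2) = poisson t s1 + poisson t s2"
  by (metis minus_add_distrib poisson_add_left poisson_antisym)

lemma poisson_scale_right: "poisson t (wscale c s) = wscale c (poisson t s)"
  by (metis poisson_antisym poisson_scale_left wscale_minus)

lemma poisson_single: "poisson (single x c) (single y d) = wscale (c * d) (poisson_mon x y)"
  using poisson_eq_sum[of "{x}" "single x c" "{y}" "single y d"] by simp

section \<open>Symbols built on a fixed monomial\<close>

definition push_keys :: "('a \<Rightarrow> 'b) \<Rightarrow> ('a \<Rightarrow>\<^sub>0 complex) \<Rightarrow> ('b \<Rightarrow>\<^sub>0 complex)" where
  "push_keys \<phi> = extend_linear (\<lambda>m c. single (\<phi> m) c)"

lemma lookup_push_keys:
  "lookup (push_keys \<phi> G) x = (\<Sum>m\<in>keys G. if \<phi> m = x then lookup G m else 0)"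
  unfolding push_keys_def extend_linear_def lookup_sum by (simp add: lookup_single when_def)

lemma push_keys_single [simp]: "push_keys \<phi> (single m c) = single (\<phi> m) c"
  unfolding push_keys_def by (simp add: extend_linear_single)

lemma push_keys_add: "push_keys \<phi> (F + G) = push_keys \<phi> F + push_keys \<phi> G"
  unfolding push_keys_def by (rule extend_linear_add) (simp add: single_add)

lemma push_keys_sum: "push_keys \<phi> (sum f S) = (\<Sum>i\<in>S. push_keys \<phi> (f i))"
  unfolding push_keys_def by (rule extend_linear_sum) (simp add: single_add)

lemma push_keys_zero [simp]: "push_keys \<phi> 0 = 0"
  by (simp add: push_keys_def)

lemma push_keys_uminus: "push_keys \<phi> (- G) = - push_keys \<phi> G"
  by (metis add.right_inverse eq_neg_iff_add_eq_0 push_keys_add push_keys_zero)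

lemma push_keys_scale: "push_keys (\<phi> :: midx \<Rightarrow> widx) (single 0 c * G) = wscale c (push_keys \<phi> G)"
proof -
  have "keys (single 0 c * G) \<subseteq> keys G" by (auto simp: in_keys_iff lookup_single_0_mult)
  then have "push_keys \<phi> (single 0 c * G) = (\<Sum>m\<in>keys G. single (\<phi> m) (lookup (single 0 c * G) m))"
    unfolding push_keys_def by (intro extend_linear_eq_sum) auto
  then show ?thesis
    by (simp add: push_keys_def extend_linear_def wscale_sum lookup_single_0_mult wscale_single)
qed

text \<open>\<open>diag_shift (\<alpha>, \<beta>) G\<close> is a^(\<alpha>,\<beta>) times the polynomial G in the number variables
  N_j = a_j\<dagger> a_j, read as a symbol (all factors commute).\<close>

abbreviation diag_shift :: "widx \<Rightarrow> (midx \<Rightarrow>\<^sub>0 complex) \<Rightarrow> weyl" where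
  "diag_shift u \<equiv> push_keys (\<lambda>m. (fst u + m, snd u + m))"

abbreviation diag :: "(midx \<Rightarrow>\<^sub>0 complex) \<Rightarrow> weyl" where
  "diag \<equiv> push_keys (\<lambda>m. (m, m))"

definition mode_gap :: "midx \<Rightarrow> midx \<Rightarrow> nat \<Rightarrow> complex" where
  "mode_gap a b j = of_nat (lookup b j) - of_nat (lookup a j)"

lemma mode_gap_swap: "mode_gap b a j = - mode_gap a b j"
  by (simp add: mode_gap_def)

text \<open>The derivation \<Sum>_j (b_j - a_j) \<partial>/\<partial>N_j on polynomials in the number variables.\<close>

definition number_deriv_mon :: "midx \<Rightarrow> midx \<Rightarrow> midx \<Rightarrow> (midx \<Rightarrow>\<^sub>0 complex)" where
  "number_deriv_mon a b M = (\<Sum>j\<in>keys M. single (M - unit_idx j) (mode_gap a b j * of_nat (lookup M j)))"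

definition number_deriv :: "midx \<Rightarrow> midx \<Rightarrow> (midx \<Rightarrow>\<^sub>0 complex) \<Rightarrow> (midx \<Rightarrow>\<^sub>0 complex)" where
  "number_deriv a b = extend_linear (\<lambda>m c. single 0 c * number_deriv_mon a b m)"

lemma number_deriv_single: "number_deriv a b (single m c) = single 0 c * number_deriv_mon a b m"
  unfolding number_deriv_def by (simp add: extend_linear_single)

lemma number_deriv_add: "number_deriv a b (F + G) = number_deriv a b F + number_deriv a b G"
  unfolding number_deriv_def by (rule extend_linear_add) (simp add: single_add distrib_right)

lemma number_deriv_zero [simp]: "number_deriv a b 0 = 0"
  by (simp add: number_deriv_def)

lemma number_deriv_swap: "number_deriv b a H = - number_deriv a b H"
proof -
  have "number_deriv_mon b a M = - number_deriv_mon a b M" for M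
    unfolding number_deriv_mon_def sum_negf[symmetric]
    by (intro sum.cong refl) (simp add: mode_gap_swap[of b a] single_uminus)
  then show ?thesis
    unfolding number_deriv_def extend_linear_def sum_negf[symmetric] by simp
qed

lemma poisson_mon_diag_shift_diag:
  "poisson_mon (a + x, b + x) (y, y) = diag_shift (a, b) (single x 1 * number_deriv_mon a b y)"
proof -
  have 1: "single_contractions (a + x, b + x) (y, y) = (\<Sum>j\<in>keys y.
      single (a + x + y - unit_idx j, b + x + y - unit_idx j) (of_nat (lookup (b + x) j * lookup y j)))"
    by (subst single_contractions_eq_sum[where S = "keys y"]) auto
  have 2: "single_contractions (y, y) (a + x, b + x) = (\<Sum>j\<in>keys y.
      single (y + (a + x) - unit_idx j, y + (b + x) - unit_idx j) (of_nat (lookup y j * lookup (a + x) j)))"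
    by (subst single_contractions_eq_sum[where S = "keys y"]) auto
  have 3: "diag_shift (a, b) (single x 1 * number_deriv_mon a b y) = (\<Sum>j\<in>keys y.
      single (a + (x + (y - unit_idx j)), b + (x + (y - unit_idx j))) (mode_gap a b j * of_nat (lookup y j)))"
    unfolding number_deriv_mon_def sum_distrib_left mult_single push_keys_sum by simp
  have "poisson_mon (a + x, b + x) (y, y) = (\<Sum>j\<in>keys y.
      single (a + (x + (y - unit_idx j)), b + (x + (y - unit_idx j))) (mode_gap a b j * of_nat (lookup y j)))"
    unfolding poisson_mon_def 1 2 sum_subtractf[symmetric]
  proof (rule sum.cong[OF refl])
    fix j assume j: "j \<in> keys y"
    have e1: "a + x + y - unit_idx j = a + (x + (y - unit_idx j))"
      "b + x + y - unit_idx j = b + (x + (y - unit_idx j))"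
      using add_minus_unit_idx[OF j, of "a + x"] add_minus_unit_idx[OF j, of "b + x"]
      by (simp_all add: add.assoc)
    then have e2: "y + (a + x) - unit_idx j = a + (x + (y - unit_idx j))"
      "y + (b + x) - unit_idx j = b + (x + (y - unit_idx j))"
      by (simp_all add: add.commute add.left_commute)
    show "single (a + x + y - unit_idx j, b + x + y - unit_idx j) (of_nat (lookup (b + x) j * lookup y j)) -
          single (y + (a + x) - unit_idx j, y + (b + x) - unit_idx j) (of_nat (lookup y j * lookup (a + x) j)) =
          single (a + (x + (y - unit_idx j)), b + (x + (y - unit_idx j))) (mode_gap a b j * of_nat (lookup y j))"
      unfolding e1 e2 single_diff[symmetric] by (simp add: lookup_add mode_gap_def algebra_simps)
  qed
  with 3 show ?thesis by simp
qed

lemma poisson_mon_diag_shift_swap: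
  "poisson_mon (a + x, b + x) (b + y, a + y) = diag (number_deriv_mon a b (a + b + x + y))"
proof -
  define M where "M = a + b + x + y"
  have 1: "single_contractions (a + x, b + x) (b + y, a + y)
      = (\<Sum>j\<in>keys M. single (M - unit_idx j, M - unit_idx j) (of_nat (lookup (b + x) j * lookup (b + y) j)))"
    by (subst single_contractions_eq_sum[where S = "keys M"])
      (auto simp: M_def in_keys_iff lookup_add ac_simps)
  have 2: "single_contractions (b + y, a + y) (a + x, b + x)
      = (\<Sum>j\<in>keys M. single (M - unit_idx j, M - unit_idx j) (of_nat (lookup (a + y) j * lookup (a + x) j)))"
    by (subst single_contractions_eq_sum[where S = "keys M"])
      (auto simp: M_def in_keys_iff lookup_add ac_simps)
  have "poisson_mon (a + x, b + x) (b + y, a + y)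
      = (\<Sum>j\<in>keys M. single (M - unit_idx j, M - unit_idx j) (mode_gap a b j * of_nat (lookup M j)))"
    unfolding poisson_mon_def 1 2 sum_subtractf[symmetric]
    by (rule sum.cong[OF refl]) (simp add: single_diff[symmetric] M_def lookup_add mode_gap_def algebra_simps)
  then show ?thesis unfolding number_deriv_mon_def push_keys_sum M_def by simp
qed

lemma poisson_diag_shift_swap:
  "poisson (diag_shift (a, b) A) (diag_shift (b, a) B) = diag (number_deriv a b (A * B * single (a + b) 1))"
proof (induction A arbitrary: B rule: poly_mapping_single_induct)
  case (single x c)
  show ?case
  proof (induction B rule: poly_mapping_single_induct)
    case (single y d)
    have "single x c * single y d * single (a + b) 1 = single (a + b + x + y) (c * d)"
      by (simp add: mult_single ac_simps)
    then show ?case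
      by (simp add: poisson_single poisson_mon_diag_shift_swap number_deriv_single push_keys_scale)
  qed (simp_all add: push_keys_add poisson_add_right distrib_right distrib_left number_deriv_add)
qed (simp_all add: push_keys_add poisson_add_left distrib_right number_deriv_add)

lemma poisson_diag_shift_diag:
  "poisson (diag_shift (a, b) A) (diag H) = diag_shift (a, b) (A * number_deriv a b H)"
proof (induction A arbitrary: H rule: poly_mapping_single_induct)
  case (single x c)
  show ?case
  proof (induction H rule: poly_mapping_single_induct)
    case (single y d)
    have "single x c * number_deriv a b (single y d) = single 0 (c * d) * (single x 1 * number_deriv_mon a b y)"
      unfolding number_deriv_single
      by (subst (1) mult_single[of 0 c x 1, simplified, symmetric]) (simp add: mult_single ac_simps)
    then show ?case
      by (simp add: poisson_single poisson_mon_diag_shift_diag push_keys_scale)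
  qed (simp_all add: push_keys_add poisson_add_right distrib_left number_deriv_add)
qed (simp_all add: push_keys_add poisson_add_left distrib_right)

section \<open>Restriction to a line in the number variables\<close>

text \<open>\<open>line_eval a b\<close> substitutes N_j \<mapsto> 1 + (b_j - a_j) t; it turns \<open>number_deriv a b\<close> into d/dt.\<close>

definition line_factor :: "midx \<Rightarrow> midx \<Rightarrow> nat \<Rightarrow> complex poly" where
  "line_factor a b j = [:1, mode_gap a b j:]"

definition line_mon :: "midx \<Rightarrow> midx \<Rightarrow> midx \<Rightarrow> complex poly" where
  "line_mon a b m = (\<Prod>j\<in>keys m. line_factor a b j ^ lookup m j)"

definition line_eval :: "midx \<Rightarrow> midx \<Rightarrow> (midx \<Rightarrow>\<^sub>0 complex) \<Rightarrow> complex poly" where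
  "line_eval a b = extend_linear (\<lambda>m c. smult c (line_mon a b m))"

lemma line_mon_eq_prod:
  "finite S \<Longrightarrow> keys m \<subseteq> S \<Longrightarrow> line_mon a b m = (\<Prod>j\<in>S. line_factor a b j ^ lookup m j)"
  unfolding line_mon_def by (rule prod.mono_neutral_left) (auto simp: in_keys_iff)

lemma line_mon_add: "line_mon a b (m + m') = line_mon a b m * line_mon a b m'"
proof -
  let ?S = "keys m \<union> keys m'"
  have "line_mon a b (m + m') = (\<Prod>j\<in>?S. line_factor a b j ^ lookup (m + m') j)"
    using keys_add[of m m'] by (intro line_mon_eq_prod) auto
  also have "\<dots> = line_mon a b m * line_mon a b m'"
    by (simp add: lookup_add power_add prod.distrib line_mon_eq_prod[of ?S])
  finally show ?thesis .
qed

lemma line_mon_0 [simp]: "line_mon a b 0 = 1"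
  by (simp add: line_mon_def)

lemma line_eval_single: "line_eval a b (single m c) = smult c (line_mon a b m)"
  unfolding line_eval_def by (simp add: extend_linear_single)

lemma line_eval_add: "line_eval a b (F + G) = line_eval a b F + line_eval a b G"
  unfolding line_eval_def by (rule extend_linear_add) (simp add: smult_add_left)

lemma line_eval_sum: "line_eval a b (sum f S) = (\<Sum>i\<in>S. line_eval a b (f i))"
  unfolding line_eval_def by (rule extend_linear_sum) (simp add: smult_add_left)

lemma line_eval_zero [simp]: "line_eval a b 0 = 0"
  by (simp add: line_eval_def)

lemma line_eval_mult: "line_eval a b (F * G) = line_eval a b F * line_eval a b G"
proof (induction F rule: poly_mapping_single_induct)
  case (single m c)
  show ?case
  proof (induction G rule: poly_mapping_single_induct)
    case (single m' c')
    show ?case by (simp add: mult_single line_eval_single line_mon_add mult.commute mult.left_commute)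
  qed (simp_all add: distrib_left line_eval_add)
qed (simp_all add: distrib_right line_eval_add)

lemma line_eval_number_deriv_mon: "line_eval a b (number_deriv_mon a b M) = pderiv (line_mon a b M)"
proof -
  let ?L = "line_factor a b"
  have summand: "smult (mode_gap a b j * of_nat (lookup M j)) (line_mon a b (M - unit_idx j))
      = (\<Prod>i\<in>keys M - {j}. ?L i ^ lookup M i) * pderiv (?L j ^ lookup M j)" if j: "j \<in> keys M" for j
  proof -
    have "line_mon a b (M - unit_idx j) = (\<Prod>i\<in>keys M. ?L i ^ lookup (M - unit_idx j) i)"
      by (rule line_mon_eq_prod) (auto simp: in_keys_iff lookup_minus lookup_unit_idx)
    also have "\<dots> = ?L j ^ lookup (M - unit_idx j) j * (\<Prod>i\<in>keys M - {j}. ?L i ^ lookup (M - unit_idx j) i)"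
      by (rule prod.remove[OF finite_keys j])
    also have "(\<Prod>i\<in>keys M - {j}. ?L i ^ lookup (M - unit_idx j) i) = (\<Prod>i\<in>keys M - {j}. ?L i ^ lookup M i)"
      by (intro prod.cong) (auto simp: lookup_minus lookup_unit_idx)
    finally have "line_mon a b (M - unit_idx j) = ?L j ^ (lookup M j - 1) * (\<Prod>i\<in>keys M - {j}. ?L i ^ lookup M i)"
      by (simp add: lookup_minus lookup_unit_idx)
    moreover have "pderiv (?L j) = [:mode_gap a b j:]"
      by (simp add: line_factor_def pderiv_pCons)
    ultimately show ?thesis unfolding pderiv_power by (simp add: mult_ac)
  qed
  have "line_eval a b (number_deriv_mon a b M)
      = (\<Sum>j\<in>keys M. smult (mode_gap a b j * of_nat (lookup M j)) (line_mon a b (M - unit_idx j)))"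
    unfolding number_deriv_mon_def line_eval_sum line_eval_single ..
  also have "\<dots> = (\<Sum>j\<in>keys M. (\<Prod>i\<in>keys M - {j}. ?L i ^ lookup M i) * pderiv (?L j ^ lookup M j))"
    by (rule sum.cong[OF refl summand])
  also have "\<dots> = pderiv (line_mon a b M)"
    unfolding line_mon_def pderiv_prod ..
  finally show ?thesis .
qed

lemma line_eval_number_deriv: "line_eval a b (number_deriv a b G) = pderiv (line_eval a b G)"
proof (induction G rule: poly_mapping_single_induct)
  case (single m c)
  show ?case
    by (simp add: number_deriv_single line_eval_mult line_eval_single line_eval_number_deriv_mon pderiv_smult)
qed (simp_all add: number_deriv_add line_eval_add pderiv_add)

definition unbalanced_weight :: "midx \<Rightarrow> midx \<Rightarrow> nat" where
  "unbalanced_weight a b = (\<Sum>j\<in>keys (a + b). if lookup a j = lookup b j then 0 else lookup a j + lookup b j)"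

lemma degree_line_eval_single: "degree (line_eval a b (single (a + b) 1)) = unbalanced_weight a b"
proof -
  have nz: "line_factor a b j \<noteq> 0" for j
    by (simp add: line_factor_def)
  have deg: "degree (line_factor a b j) = (if lookup a j = lookup b j then 0 else 1)" for j
    by (simp add: line_factor_def mode_gap_def)
  have "degree (line_mon a b (a + b)) = (\<Sum>j\<in>keys (a + b). degree (line_factor a b j ^ lookup (a + b) j))"
    unfolding line_mon_def by (rule degree_prod_eq_sum_degree) (simp add: nz)
  also have "\<dots> = unbalanced_weight a b"
    unfolding unbalanced_weight_def
    by (intro sum.cong refl) (simp add: degree_power_eq[OF nz] deg lookup_add)
  finally show ?thesis by (simp add: line_eval_single)
qed

section \<open>The Poisson chain of a basis pair\<close>

definition two_sided :: "midx \<Rightarrow> midx \<Rightarrow> complex \<Rightarrow> complex \<Rightarrow> (midx \<Rightarrow>\<^sub>0 complex) \<Rightarrow> weyl" where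
  "two_sided a b p q G = wscale p (diag_shift (a, b) G) + wscale q (diag_shift (b, a) G)"

lemma poisson_two_sided:
  "poisson (two_sided a b p1 p2 G) (two_sided a b m1 m2 G)
     = wscale (p1 * m2 - p2 * m1) (diag (number_deriv a b (G * G * single (a + b) 1)))"
proof -
  define X where "X = diag_shift (a, b) G"
  define Y where "Y = diag_shift (b, a) G"
  have "poisson (wscale p1 X + wscale p2 Y) (wscale m1 X + wscale m2 Y) = wscale (p1 * m2 - p2 * m1) (poisson X Y)"
    by (simp only: poisson_add_left poisson_add_right poisson_scale_left poisson_scale_right
        poisson_self poisson_antisym[of Y X], rule poly_mapping_eqI, simp add: lookup_add algebra_simps)
  then show ?thesis
    unfolding two_sided_def X_def Y_def poisson_diag_shift_swap .
qed

lemma poisson_two_sided_diag: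
  "poisson (two_sided a b p q G) (wscale k (diag H))
     = two_sided a b (k * p) (- (k * q)) (G * number_deriv a b H)"
proof -
  have swapped: "poisson (diag_shift (b, a) G) (diag H) = - diag_shift (b, a) (G * number_deriv a b H)"
    using poisson_diag_shift_diag[of b a G H] by (simp add: number_deriv_swap[of b a] push_keys_uminus)
  show ?thesis
    unfolding two_sided_def
    by (simp only: poisson_add_left poisson_scale_left poisson_scale_right
        poisson_diag_shift_diag[of a b] swapped,
        rule poly_mapping_eqI, simp add: lookup_add algebra_simps)
qed

lemma two_sided_nonzero:
  assumes "a \<noteq> b" "p \<noteq> 0" "G \<noteq> 0"
  shows "two_sided a b p q G \<noteq> 0"
proof -
  obtain m where m: "m \<in> keys G" using assms(3) by (metis ex_in_conv in_keys_iff poly_mapping_eqI lookup_zero)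
  have swap: "(b + m', a + m') \<noteq> (a + m, b + m)" for m'
  proof
    assume "(b + m', a + m') = (a + m, b + m)"
    then have h: "lookup (b + m') j = lookup (a + m) j" "lookup (a + m') j = lookup (b + m) j" for j
      by simp_all
    have "lookup a j = lookup b j" for j
      using h[of j] unfolding lookup_add by linarith
    with assms(1) show False by (metis poly_mapping_eqI)
  qed
  have "lookup (diag_shift (a, b) G) (a + m, b + m) = lookup G m"
    unfolding lookup_push_keys using m by (simp add: sum.delta)
  moreover have "lookup (diag_shift (b, a) G) (a + m, b + m) = 0"
    unfolding lookup_push_keys using swap by (intro sum.neutral) auto
  ultimately have "lookup (two_sided a b p q G) (a + m, b + m) = p * lookup G m"
    unfolding two_sided_def by (simp add: lookup_add)
  also have "\<dots> \<noteq> 0" using assms(2) m by (simp add: in_keys_iff)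
  finally show ?thesis by auto
qed

fun poisson_chain :: "weyl \<Rightarrow> weyl \<Rightarrow> nat \<Rightarrow> weyl \<times> weyl" where
  "poisson_chain sp sm 0 = (sp, sm)"
| "poisson_chain sp sm (Suc l) = (let (p, m) = poisson_chain sp sm l; c = poisson p m in (poisson p c, poisson m c))"

lemma leading_part_chain2:
  assumes "leading_part yp D sp" "leading_part ym D sm" "2 \<le> D"
  shows "leading_part (fst (chain2 yp ym l)) (3 ^ l * (D - 2) + 2) (fst (poisson_chain sp sm l)) \<and>
         leading_part (snd (chain2 yp ym l)) (3 ^ l * (D - 2) + 2) (snd (poisson_chain sp sm l))"
proof (induction l)
  case 0
  have "3 ^ 0 * (D - 2) + 2 = D" using assms(3) by simp
  then show ?case using assms by simp
next
  case (Suc l)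
  obtain p m where c: "chain2 yp ym l = (p, m)" by (cases "chain2 yp ym l")
  obtain p' m' where s: "poisson_chain sp sm l = (p', m')" by (cases "poisson_chain sp sm l")
  define t where "t = 3 ^ l * (D - 2)"
  have ih: "leading_part p (t + 2) p'" "leading_part m (t + 2) m'" using Suc c s unfolding t_def by auto
  have c1: "leading_part (wcomm p m) (2 * t + 2) (poisson p' m')"
    using leading_part_wcomm[OF ih] by (simp add: mult_2)
  have "leading_part (wcomm p (wcomm p m)) (3 * t + 2) (poisson p' (poisson p' m'))"
    "leading_part (wcomm m (wcomm p m)) (3 * t + 2) (poisson m' (poisson p' m'))"
    using leading_part_wcomm[OF ih(1) c1] leading_part_wcomm[OF ih(2) c1] by simp_all
  moreover have "3 ^ Suc l * (D - 2) + 2 = 3 * t + 2" unfolding t_def by simp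
  ultimately show ?case by (simp only:) (simp add: c s Let_def)
qed

lemma mult_pderiv_pderiv_nonzero:
  fixes \<phi> \<rho> :: "'a::field_char_0 poly"
  assumes "\<phi> \<noteq> 0" "2 \<le> degree \<rho>"
  shows "\<phi> * pderiv (pderiv (\<phi> * \<phi> * \<rho>)) \<noteq> 0"
proof -
  have "\<rho> \<noteq> 0" using assms(2) by auto
  then have "degree (\<phi> * \<phi> * \<rho>) = degree \<phi> + degree \<phi> + degree \<rho>"
    using assms(1) by (simp add: degree_mult_eq)
  then have "degree (pderiv (\<phi> * \<phi> * \<rho>)) \<noteq> 0" using assms(2) by (simp add: degree_pderiv)
  then have "pderiv (pderiv (\<phi> * \<phi> * \<rho>)) \<noteq> 0" by (simp add: pderiv_eq_0_iff)
  then show ?thesis using assms(1) by simp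
qed

lemma push_keys_one [simp]: "push_keys \<phi> 1 = single (\<phi> 0) 1"
  using push_keys_single[of \<phi> 0 1] by simp

lemma gbasis_two_sided:
  "gbasis SPlus (a, b) = two_sided a b \<i> \<i> 1"
  "gbasis SMinus (a, b) = two_sided a b (-1) 1 1"
  unfolding gbasis_def two_sided_def wadj_def wmon_def
  by (simp add: wscale_add wscale_single add.commute)
    (rule poly_mapping_eqI, simp add: lookup_add lookup_minus)

text \<open>Each step multiplies the coefficients by the determinant k = p1 m2 - p2 m1 (the new determinant
  is -k^3) and replaces the restriction g of G to the line by g (g^2 r)''.\<close>

lemma poisson_chain_two_sided:
  assumes "2 \<le> unbalanced_weight a b"
  shows "\<exists>G p1 p2 m1 m2.
           poisson_chain (gbasis SPlus (a, b)) (gbasis SMinus (a, b)) l = (two_sided a b p1 p2 G, two_sided a b m1 m2 G)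
           \<and> p1 \<noteq> 0 \<and> m1 \<noteq> 0 \<and> p1 * m2 - p2 * m1 \<noteq> 0 \<and> line_eval a b G \<noteq> 0"
proof (induction l)
  case 0
  have "line_eval a b 1 \<noteq> 0" using line_eval_single[of a b 0 1] by simp
  then show ?case
    by (intro exI[of _ 1] exI[of _ \<i>] exI[of _ \<i>] exI[of _ "-1"] exI[of _ 1])
      (simp add: gbasis_two_sided complex_eq_iff)
next
  case (Suc l)
  then obtain G p1 p2 m1 m2 where
    chain: "poisson_chain (gbasis SPlus (a, b)) (gbasis SMinus (a, b)) l = (two_sided a b p1 p2 G, two_sided a b m1 m2 G)"
    and nz: "p1 \<noteq> 0" "m1 \<noteq> 0" "p1 * m2 - p2 * m1 \<noteq> 0" "line_eval a b G \<noteq> 0" by blast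
  define k where "k = p1 * m2 - p2 * m1"
  define G' where "G' = G * number_deriv a b (number_deriv a b (G * G * single (a + b) 1))"
  have "poisson_chain (gbasis SPlus (a, b)) (gbasis SMinus (a, b)) (Suc l)
      = (two_sided a b (k * p1) (- (k * p2)) G', two_sided a b (k * m1) (- (k * m2)) G')"
    by (simp add: chain poisson_two_sided poisson_two_sided_diag k_def G'_def)
  moreover have "line_eval a b G' = line_eval a b G
      * pderiv (pderiv (line_eval a b G * line_eval a b G * line_eval a b (single (a + b) 1)))"
    unfolding G'_def by (simp add: line_eval_mult line_eval_number_deriv)
  then have "line_eval a b G' \<noteq> 0"
    by (simp only:) (rule mult_pderiv_pderiv_nonzero[OF nz(4)], simp add: degree_line_eval_single assms)
  moreover have "k * p1 * - (k * m2) - - (k * p2) * (k * m1) = - (k * k * k)"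
    unfolding k_def by (simp add: algebra_simps)
  ultimately show ?case using nz unfolding k_def by fastforce
qed

lemma unbalanced_weight_le_widx_abs: "unbalanced_weight a b \<le> widx_abs (a, b)"
proof -
  have "unbalanced_weight a b \<le> (\<Sum>j\<in>keys (a + b). lookup (a + b) j)"
    unfolding unbalanced_weight_def by (intro sum_mono) (simp add: lookup_add)
  also have "\<dots> = midx_abs (a + b)" by (simp add: midx_abs_def)
  also have "\<dots> = widx_abs (a, b)" by (simp add: widx_abs_def midx_abs_add)
  finally show ?thesis .
qed

lemma unbalanced_weight_self [simp]: "unbalanced_weight a a = 0"
  by (simp add: unbalanced_weight_def)

lemma lookup_gbasis_nonzero: "lookup (gbasis s g) x \<noteq> 0 \<Longrightarrow> x = g \<or> x = (snd g, fst g)"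
  unfolding gbasis_def wadj_def wmon_def
  by (cases s) (auto simp: lookup_add lookup_minus lookup_single when_def split: if_splits)

lemma leading_part_gbasis: "leading_part (gbasis s g) (widx_abs g) (gbasis s g)"
  unfolding leading_part_def widx_abs_def
  by (auto dest: lookup_gbasis_nonzero)

lemma wdeg_chain2_gbasis:
  assumes "2 \<le> unbalanced_weight a b"
  shows "wdeg (chain_sel \<sigma> (chain2 (gbasis SPlus (a, b)) (gbasis SMinus (a, b)) l))
           = ereal (real (3 ^ l * (widx_abs (a, b) - 2) + 2))"
proof -
  have "a \<noteq> b" using assms by auto
  obtain G p1 p2 m1 m2 where
    chain: "poisson_chain (gbasis SPlus (a, b)) (gbasis SMinus (a, b)) l = (two_sided a b p1 p2 G, two_sided a b m1 m2 G)"
    and nz: "p1 \<noteq> 0" "m1 \<noteq> 0" "line_eval a b G \<noteq> 0"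
    using poisson_chain_two_sided[OF assms] by blast
  have "G \<noteq> 0" using nz(3) by auto
  then have nonzero: "two_sided a b p1 p2 G \<noteq> 0" "two_sided a b m1 m2 G \<noteq> 0"
    using two_sided_nonzero[OF \<open>a \<noteq> b\<close>] nz(1,2) by auto
  have "2 \<le> widx_abs (a, b)" using assms unbalanced_weight_le_widx_abs[of a b] by linarith
  note lp = leading_part_chain2[OF leading_part_gbasis[of SPlus "(a, b)"] leading_part_gbasis[of SMinus "(a, b)"] this, of l]
  show ?thesis
  proof (cases \<sigma>)
    case SPlus
    show ?thesis unfolding SPlus chain_sel_def sgn.case
      by (rule wdeg_eq_if_leading_part[OF conjunct1[OF lp]]) (simp add: chain nonzero)
  next
    case SMinus
    show ?thesis unfolding SMinus chain_sel_def sgn.case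
      by (rule wdeg_eq_if_leading_part[OF conjunct2[OF lp]]) (simp add: chain nonzero)
  qed
qed

section \<open>The class \<perp>\<close>

lemma class_perp_swap: "class_perp n (b, a) = class_perp n (a, b)"
proof -
  have "(\<lambda>k. k < n \<and> lookup b k + lookup a k = 1 \<and> (\<forall>j<n. j \<noteq> k \<longrightarrow> lookup b j = lookup a j)) =
        (\<lambda>k. k < n \<and> lookup a k + lookup b k = 1 \<and> (\<forall>j<n. j \<noteq> k \<longrightarrow> lookup a j = lookup b j))"
    by (auto simp: fun_eq_iff add.commute)
  then have "class_om n (b, a) = class_om n (a, b)"
    unfolding class_om_def widx_abs_def by (simp add: add.commute)
  then show ?thesis
    unfolding class_perp_def class0_def class1_def class2_def class_eq_def widx_abs_def
    by (auto simp: add.commute)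
qed

lemma class_perp_if_in_hatA_perp:
  assumes "gbasis \<sigma> \<gamma> \<in> hatA_perp n" "lookup (gbasis \<sigma> \<gamma>) \<gamma> \<noteq> 0"
  shows "class_perp n \<gamma>"
proof -
  from assms(1) obtain S c where S: "S \<subseteq> {gbasis s g | s g. basis_idx n s g \<and> class_perp n g}"
    and f: "gbasis \<sigma> \<gamma> = (\<Sum>x\<in>S. wscale (complex_of_real (c x)) x)"
    unfolding hatA_perp_def rspan_def by blast
  have "lookup (gbasis \<sigma> \<gamma>) \<gamma> = (\<Sum>x\<in>S. complex_of_real (c x) * lookup x \<gamma>)"
    unfolding f lookup_sum by simp
  with assms(2) obtain x where x: "x \<in> S" "lookup x \<gamma> \<noteq> 0"
    by (metis (no_types, lifting) mult_zero_right sum.neutral)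
  then obtain s g where "x = gbasis s g" "class_perp n g" using S by blast
  with x lookup_gbasis_nonzero show ?thesis
    by (metis class_perp_swap prod.collapse)
qed

lemma lookup_gbasis_self_nonzero:
  assumes "s = SMinus \<longrightarrow> fst g \<noteq> snd g"
  shows "lookup (gbasis s g) g \<noteq> 0"
  using assms unfolding gbasis_def wadj_def wmon_def
  by (cases s) (auto simp: lookup_add lookup_minus lookup_single when_def prod_eq_iff)

lemma class_perp_fst_neq_snd:
  assumes "class_perp n (a, b)"
  shows "a \<noteq> b"
proof
  assume "a = b"
  then have "widx_abs (a, b) = 2 * midx_abs a" by (simp add: widx_abs_def)
  then have "class0 (a, b) \<or> class_eq (a, b)"
    unfolding class0_def class_eq_def using \<open>a = b\<close> by (cases "midx_abs a \<le> 1") auto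
  with assms show False by (auto simp: class_perp_def)
qed

lemma class_perp_widx_abs_ge_3:
  assumes "class_perp n (a, b)"
  shows "3 \<le> widx_abs (a, b)"
proof -
  have "a \<noteq> b" using class_perp_fst_neq_snd[OF assms] .
  then have "widx_abs (a, b) \<noteq> 0" by (auto simp: widx_abs_def midx_abs_eq_0_iff)
  moreover have "widx_abs (a, b) \<noteq> 1" "widx_abs (a, b) \<noteq> 2"
    using assms \<open>a \<noteq> b\<close> by (auto simp: class_perp_def class1_def class2_def)
  ultimately show ?thesis by linarith
qed

text \<open>Weight at most 1 means that a and b differ in a single mode, by one quantum: the class om.\<close>

lemma class_perp_unbalanced_weight:
  assumes perp: "class_perp n (a, b)" and modes: "in_modes n (a, b)"
  shows "2 \<le> unbalanced_weight a b"
proof (rule ccontr)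
  define f where "f j = (if lookup a j = lookup b j then 0 else lookup a j + lookup b j)" for j
  assume "\<not> 2 \<le> unbalanced_weight a b"
  then have le1: "sum f (keys (a + b)) \<le> 1" unfolding unbalanced_weight_def f_def by simp
  obtain k where k: "lookup a k \<noteq> lookup b k"
    using class_perp_fst_neq_snd[OF perp] by (metis poly_mapping_eqI)
  then have kab: "k \<in> keys (a + b)" by (auto simp: in_keys_iff lookup_add)
  have "sum f (keys (a + b)) = f k + sum f (keys (a + b) - {k})"
    by (rule sum.remove[OF finite_keys kab])
  moreover have "f k = lookup a k + lookup b k" "1 \<le> f k" using k by (auto simp: f_def)
  ultimately have k1: "lookup a k + lookup b k = 1" and rest: "sum f (keys (a + b) - {k}) = 0"
    using le1 by linarith+
  have others: "lookup a j = lookup b j" if "j \<noteq> k" for j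
  proof (cases "j \<in> keys (a + b)")
    case True
    then have "f j = 0" using rest that by simp
    then show ?thesis unfolding f_def by (auto split: if_splits)
  qed (simp add: in_keys_iff lookup_add)
  have "k \<in> keys a \<or> k \<in> keys b" using k1 by (auto simp: in_keys_iff)
  then have "k < n" using modes unfolding in_modes_def by auto
  then have "\<exists>!k'. k' < n \<and> lookup a k' + lookup b k' = 1 \<and> (\<forall>j<n. j \<noteq> k' \<longrightarrow> lookup a j = lookup b j)"
    using k k1 others by (intro ex1I[of _ k]) auto
  then have "class_om n (a, b)"
    unfolding class_om_def using class_perp_widx_abs_ge_3[OF perp] by simp
  with perp show False by (simp add: class_perp_def)
qed

theorem theorem7:
  fixes n :: nat and \<gamma> :: widx and \<sigma> :: sgn and l :: nat
  assumes "n \<ge> 1"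
    and "in_modes n \<gamma>"
    and "\<not> lex_less (fst \<gamma>) (snd \<gamma>)"
    and "\<sigma> = SMinus \<longrightarrow> lex_less (snd \<gamma>) (fst \<gamma>)"
    and "gbasis \<sigma> \<gamma> \<in> hatA_perp n"
  shows "wdeg (chain_sel \<sigma> (chain2 (gbasis SPlus \<gamma>) (gbasis SMinus \<gamma>) l))
           = ereal (3 ^ l * (real (widx_abs \<gamma>) - 2) + 2)
       \<and> ereal (3 ^ l * (real (widx_abs \<gamma>) - 2) + 2) \<ge> ereal (3 ^ l + 2)"
proof -
  obtain a b where \<gamma>: "\<gamma> = (a, b)" by (cases \<gamma>)
  have "\<sigma> = SMinus \<longrightarrow> a \<noteq> b"
    using assms(4) unfolding \<gamma> lex_less_def by auto
  then have "lookup (gbasis \<sigma> \<gamma>) \<gamma> \<noteq> 0"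
    unfolding \<gamma> by (intro lookup_gbasis_self_nonzero) simp
  then have perp: "class_perp n (a, b)"
    using class_perp_if_in_hatA_perp[OF assms(5)] \<gamma> by simp
  have deg: "wdeg (chain_sel \<sigma> (chain2 (gbasis SPlus \<gamma>) (gbasis SMinus \<gamma>) l))
               = ereal (real (3 ^ l * (widx_abs \<gamma> - 2) + 2))"
    unfolding \<gamma> using wdeg_chain2_gbasis class_perp_unbalanced_weight[OF perp] assms(2) \<gamma> by simp
  have "3 \<le> widx_abs \<gamma>" using class_perp_widx_abs_ge_3[OF perp] \<gamma> by simp
  moreover have "(3::real) ^ l * 1 \<le> 3 ^ l * (real (widx_abs \<gamma>) - 2)" if "3 \<le> widx_abs \<gamma>"
    using that by (intro mult_left_mono) auto
  ultimately show ?thesis using deg by (simp add: of_nat_diff)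
qed

end
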